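(* Let $\theta=(\gamma,\mu,\sigma)\in\mathbb{R}\times\mathbb{R}\times(0,\infty)$ and $x\in\mathbb{R}$ with $1+\gamma z>0$, where $z=(x-\mu)/\sigma$, and let $u=u_\gamma(z)$. If $\gamma\ge0$ and $z\ge0$, then, with $\gamma^{-2}\log(1+\gamma z)$ and $\gamma^{-1}$ interpreted as $+\infty$ when $\gamma=0$, \[|\partial_\gamma\ell_\theta(x)|\le\max\Big\{\min\Big(\frac{z^2}{2},\frac1{\gamma^2}\log(1+\gamma z)\Big),\ \min\Big(z,\frac1\gamma\Big)\Big\}.\] If $\gamma\le0$ and $z\ge0$, then $|\partial_\gamma\ell_\theta(x)|\le\frac{\max(z^2,z)}{1+\gamma z}$. If $\gamma\ge0$ and $z\le0$, then $|\partial_\gamma\ell_\theta(x)|\le u^{1+\gamma}\max\{(\log u)^2,\log u\}$. If $\gamma\le0$ and $z\le0$, then $|\partial_\gamma\ell_\theta(x)|\le u\max\{(\log u)^2,\log u\}$.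
   Context: $u_\gamma(z)=(1+\gamma z)^{-1/\gamma}$ for $\gamma\ne0$ and $e^{-z}$ for $\gamma=0$. $\ell_\theta(x)=-\log\sigma-u+(\gamma+1)\log u$ is the GEV log-density on $\{1+\gamma z>0\}$ (GEV density $p_\theta(x)=\sigma^{-1}e^{-u}u^{\gamma+1}\mathbf 1(1+\gamma z>0)$). Its partial derivative in $\gamma$ is $\partial_\gamma\ell_\theta(x)=(1-u)\,\partial_\gamma\log u-\frac{z}{1+\gamma z}$, where $\partial_\gamma\log u=\int_0^z\frac{t}{(1+\gamma t)^2}dt$ (equal to $\frac1\gamma(\frac1\gamma\log(1+\gamma z)-\frac{z}{1+\gamma z})$ for $\gamma\ne0$ and $z^2/2$ for $\gamma=0$). *)

theory Defs
  imports "HOL-Analysis.Analysis"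
begin

definition gev_z :: "real \<Rightarrow> real \<Rightarrow> real \<Rightarrow> real" where
  "gev_z mu sg x = (x - mu) / sg"

definition gev_u :: "real \<Rightarrow> real \<Rightarrow> real" where
  "gev_u g z = (if g = 0 then exp (- z) else (1 + g * z) powr (- 1 / g))"

definition gev_ell :: "real \<Rightarrow> real \<Rightarrow> real \<Rightarrow> real \<Rightarrow> real" where
  "gev_ell g mu sg x =
     (let z = gev_z mu sg x; u = gev_u g z in - ln sg - u + (g + 1) * ln u)"

definition dlogu :: "real \<Rightarrow> real \<Rightarrow> real" where
  "dlogu g z = (if g = 0 then z^2 / 2
                else (1 / g) * ((1 / g) * ln (1 + g * z) - z / (1 + g * z)))"

definition dgamma_ell :: "real \<Rightarrow> real \<Rightarrow> real \<Rightarrow> real \<Rightarrow> real" where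
  "dgamma_ell g mu sg x =
     (let z = gev_z mu sg x; u = gev_u g z in (1 - u) * dlogu g z - z / (1 + g * z))"

end

theory Submission
  imports Defs
begin

text \<open>Write \<open>w = 1 + \<gamma> z\<close>, \<open>A = \<partial>\<^sub>\<gamma> log u \<ge> 0\<close> and \<open>L = log u\<close>, so that the score is
  \<open>(1 - u) A - z / w\<close>. The bounds \<open>1 - 1/w \<le> log w \<le> w - 1\<close> place \<open>L\<close> between \<open>-z\<close> and
  \<open>-z/w\<close>, so \<open>u \<le> 1\<close> exactly when \<open>z \<ge> 0\<close>. Hence \<open>(1 - u) A\<close> and \<open>z/w\<close>
  always share a sign, and the score is at most \<open>max A (z/w)\<close> in absolute value when
  \<open>z \<ge> 0\<close> and at most \<open>max ((u - 1) A) (-z/w)\<close> when \<open>z \<le> 0\<close>. What remains are bounds on \<open>A\<close> and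
  \<open>z/w\<close> in each sign regime: \<open>A \<le> z\<^sup>2/w\<close>, second-order Taylor bounds for \<open>log\<close> and
  \<open>exp\<close>, and the identity \<open>u powr (1 + \<gamma>) = u / w\<close>.\<close>

lemma ln_ge_one_minus_inverse:
  fixes x :: real
  assumes "x > 0"
  shows "1 - 1 / x \<le> ln x"
  using ln_le_minus_one[of "1 / x"] assms by (simp add: ln_div)

lemma ln_one_plus_minus_div_le:
  fixes y :: real
  assumes y: "y \<ge> 0"
  shows "ln (1 + y) - y / (1 + y) \<le> y\<^sup>2 / 2"
proof -
  let ?f = "\<lambda>t::real. t\<^sup>2 / 2 - ln (1 + t) + t / (1 + t)"
  have "?f 0 \<le> ?f y"
  proof (rule DERIV_nonneg_imp_nondecreasing[OF y])
    fix x :: real assume x: "0 \<le> x" "x \<le> y"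
    have "DERIV ?f x :> (2 * x / 2 - 1 / (1 + x) + ((1 + x) - x) / (1 + x)\<^sup>2)"
      using x by (auto intro!: derivative_eq_intros simp: power2_eq_square)
    moreover have "2 * x / 2 - 1 / (1 + x) + ((1 + x) - x) / (1 + x)\<^sup>2 = x * (x\<^sup>2 + 2 * x) / (1 + x)\<^sup>2"
      using x by (simp add: divide_simps power2_eq_square) (simp add: algebra_simps)
    ultimately show "\<exists>d. DERIV ?f x :> d \<and> d \<ge> 0"
      using x by auto
  qed
  then show ?thesis by simp
qed

lemma exp_neg_minus_one_plus_le:
  fixes t :: real
  assumes t: "t \<ge> 0"
  shows "t - 1 + exp (- t) \<le> t\<^sup>2"
proof -
  have "exp (- t) \<le> 1 / (1 + t)"
    using exp_ge_add_one_self[of t] t by (simp add: exp_minus field_simps)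
  also have "\<dots> \<le> 1 - t + t\<^sup>2"
    using t by (simp add: field_simps power2_eq_square)
  finally show ?thesis by simp
qed

lemma abs_shrink_minus_le_max:
  fixes u a b :: real
  assumes "0 \<le> u" "u \<le> 1" "0 \<le> a" "0 \<le> b"
  shows "\<bar>(1 - u) * a - b\<bar> \<le> max a b"
proof -
  have "0 \<le> (1 - u) * a" "(1 - u) * a \<le> a"
    using assms by (auto simp: algebra_simps mult_left_le)
  moreover have "\<bar>c - b\<bar> \<le> max a b" if "0 \<le> c" "c \<le> a" for c
    using that assms by (auto simp: abs_if max_def)
  ultimately show ?thesis by blast
qed

lemma abs_stretch_minus_le_max:
  fixes u a b :: real
  assumes "1 \<le> u" "0 \<le> a" "b \<le> 0"
  shows "\<bar>(1 - u) * a - b\<bar> \<le> max ((u - 1) * a) (- b)"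
proof -
  have "0 \<le> (u - 1) * a" using assms by auto
  then show ?thesis using assms by (auto simp: abs_if max_def algebra_simps)
qed

lemma le_max_imp_le_mult_max:
  fixes d a b c x y :: real
  assumes "d \<le> max x y" "x \<le> c * a" "y \<le> c * b" "c \<ge> 0"
  shows "d \<le> c * max a b"
proof -
  have "c * a \<le> c * max a b" "c * b \<le> c * max a b"
    using assms(4) by (simp_all add: mult_left_mono)
  then show ?thesis using assms(1-3) by linarith
qed

lemma max_le_max_min:
  fixes d a b a1 a2 b1 b2 :: real
  assumes "d \<le> max a b" "a \<le> a1" "a \<le> a2" "b \<le> b1" "b \<le> b2"
  shows "d \<le> max (min a1 a2) (min b1 b2)"
  using assms unfolding max_def min_def by (auto split: if_splits)

definition dgamma_ell_std :: "real \<Rightarrow> real \<Rightarrow> real" where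
  "dgamma_ell_std g z = (1 - gev_u g z) * dlogu g z - z / (1 + g * z)"

lemma dgamma_ell_eq_std: "dgamma_ell g mu sg x = dgamma_ell_std g (gev_z mu sg x)"
  by (simp add: dgamma_ell_def dgamma_ell_std_def Let_def)

lemma gev_u_pos: "1 + g * z > 0 \<Longrightarrow> gev_u g z > 0"
  by (simp add: gev_u_def)

lemma ln_gev_u: "1 + g * z > 0 \<Longrightarrow> ln (gev_u g z) = (if g = 0 then - z else - ln (1 + g * z) / g)"
  by (simp add: gev_u_def ln_powr)

lemma gev_u_powr_one_plus:
  assumes w: "1 + g * z > 0"
  shows "gev_u g z powr (1 + g) = gev_u g z / (1 + g * z)"
proof (cases "g = 0")
  case False
  let ?L = "ln (gev_u g z)"
  have "gev_u g z powr (1 + g) = exp ?L * exp (g * ?L)"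
    using gev_u_pos[OF w] by (simp add: powr_def algebra_simps exp_add)
  also have "exp (g * ?L) = 1 / (1 + g * z)"
    using False w by (simp add: ln_gev_u exp_minus inverse_eq_divide)
  finally show ?thesis using gev_u_pos[OF w] by simp
qed (simp add: gev_u_def)

lemma ln_gev_u_bounds_nonneg:
  assumes g: "g \<ge> 0" and w: "1 + g * z > 0"
  shows "- z \<le> ln (gev_u g z) \<and> ln (gev_u g z) \<le> - z / (1 + g * z)"
proof (cases "g = 0")
  case False
  then have g: "g > 0" using g by simp
  have "g * (z / (1 + g * z)) \<le> ln (1 + g * z)"
    using ln_ge_one_minus_inverse[OF w] w by (simp add: field_simps)
  moreover have "ln (1 + g * z) \<le> g * z"
    using ln_le_minus_one[OF w] by simp
  ultimately show ?thesis
    using g w by (simp add: ln_gev_u pos_le_divide_eq pos_divide_le_eq mult.commute)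
qed (simp add: ln_gev_u)

lemma ln_gev_u_bounds_nonpos:
  assumes g: "g \<le> 0" and w: "1 + g * z > 0"
  shows "- z / (1 + g * z) \<le> ln (gev_u g z) \<and> ln (gev_u g z) \<le> - z"
proof (cases "g = 0")
  case False
  then have g: "g < 0" using g by simp
  have "g * (z / (1 + g * z)) \<le> ln (1 + g * z)"
    using ln_ge_one_minus_inverse[OF w] w by (simp add: field_simps)
  moreover have "ln (1 + g * z) \<le> g * z"
    using ln_le_minus_one[OF w] by simp
  ultimately show ?thesis
    using g w by (simp add: ln_gev_u neg_le_divide_eq neg_divide_le_eq mult.commute)
qed (simp add: ln_gev_u)

lemma ln_gev_u_nonpos:
  assumes w: "1 + g * z > 0" and z: "z \<ge> 0"
  shows "ln (gev_u g z) \<le> 0"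
proof (cases "g \<ge> 0")
  case True
  have "z / (1 + g * z) \<ge> 0" using w z by simp
  then show ?thesis using ln_gev_u_bounds_nonneg[OF True w] by linarith
next
  case False
  then show ?thesis using ln_gev_u_bounds_nonpos[of g z] w z by linarith
qed

lemma ln_gev_u_nonneg:
  assumes w: "1 + g * z > 0" and z: "z \<le> 0"
  shows "ln (gev_u g z) \<ge> 0"
proof (cases "g \<ge> 0")
  case True
  then show ?thesis using ln_gev_u_bounds_nonneg[OF True w] z by linarith
next
  case False
  have "z / (1 + g * z) \<le> 0" using w z by (simp add: divide_nonpos_pos)
  then show ?thesis using ln_gev_u_bounds_nonpos[of g z] False w by linarith
qed

lemma dlogu_eq:
  assumes "g \<noteq> 0" "1 + g * z > 0"
  shows "dlogu g z = (ln (1 + g * z) - 1 + 1 / (1 + g * z)) / g\<^sup>2"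
  using assms by (simp add: dlogu_def field_simps power2_eq_square)

lemma dlogu_nonneg:
  assumes w: "1 + g * z > 0"
  shows "dlogu g z \<ge> 0"
proof (cases "g = 0")
  case False
  then show ?thesis
    using ln_ge_one_minus_inverse[OF w] w by (simp add: dlogu_eq)
qed (simp add: dlogu_def)

lemma dlogu_le_sq_div:
  assumes w: "1 + g * z > 0"
  shows "dlogu g z \<le> z\<^sup>2 / (1 + g * z)"
proof (cases "g = 0")
  case False
  let ?w = "1 + g * z"
  have "(?w - 1)\<^sup>2 / ?w = ?w - 2 + 1 / ?w"
    using w by (simp add: field_simps power2_eq_square)
  then have "ln ?w - 1 + 1 / ?w \<le> (?w - 1)\<^sup>2 / ?w"
    using ln_le_minus_one[OF w] by linarith
  also have "\<dots> = g\<^sup>2 * (z\<^sup>2 / ?w)"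
    by (simp add: power_mult_distrib)
  finally show ?thesis
    using False w by (simp add: dlogu_eq divide_le_eq mult.commute)
qed (simp add: dlogu_def)

lemma dlogu_le_half_sq:
  assumes g: "g \<ge> 0" and z: "z \<ge> 0"
  shows "dlogu g z \<le> z\<^sup>2 / 2"
proof (cases "g = 0")
  case False
  let ?w = "1 + g * z"
  have w: "?w > 0" using g z by (simp add: add_pos_nonneg)
  have "1 / ?w - 1 = - (g * z / ?w)"
    using w by (simp add: field_simps)
  then have "dlogu g z * g\<^sup>2 = ln ?w - g * z / ?w"
    using False w by (simp add: dlogu_eq)
  also have "\<dots> \<le> z\<^sup>2 / 2 * g\<^sup>2"
    using ln_one_plus_minus_div_le[of "g * z"] g z by (simp add: power_mult_distrib mult.commute)
  finally show ?thesis using False by simp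
qed (simp add: dlogu_def)

lemma dlogu_le_ln_div:
  assumes g: "g > 0" and z: "z \<ge> 0"
  shows "dlogu g z \<le> ln (1 + g * z) / g\<^sup>2"
proof -
  have w1: "1 + g * z \<ge> 1" using g z by simp
  then have "1 / (1 + g * z) \<le> 1" by simp
  then show ?thesis
    using g w1 by (simp add: dlogu_eq divide_right_mono)
qed

lemma dlogu_le_ln_gev_u_sq:
  assumes g: "g \<le> 0" and z: "z \<le> 0"
  shows "dlogu g z \<le> (ln (gev_u g z))\<^sup>2"
proof (cases "g = 0")
  case False
  let ?w = "1 + g * z"
  have w1: "?w \<ge> 1" using g z by (simp add: mult_nonpos_nonpos)
  then have w: "?w > 0" by simp
  have "ln ?w - 1 + exp (- ln ?w) \<le> (ln ?w)\<^sup>2"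
    using w1 by (intro exp_neg_minus_one_plus_le) simp
  then have "(ln ?w - 1 + 1 / ?w) / g\<^sup>2 \<le> (ln ?w)\<^sup>2 / g\<^sup>2"
    using w by (simp add: exp_minus inverse_eq_divide divide_right_mono)
  then show ?thesis
    using False w by (simp add: dlogu_eq ln_gev_u power_divide)
qed (simp add: dlogu_def ln_gev_u)

lemma abs_dgamma_ell_std_le_nonneg:
  assumes w: "1 + g * z > 0" and z: "z \<ge> 0"
  shows "\<bar>dgamma_ell_std g z\<bar> \<le> max (dlogu g z) (z / (1 + g * z))"
  unfolding dgamma_ell_std_def
proof (rule abs_shrink_minus_le_max)
  show "0 \<le> gev_u g z" using gev_u_pos[OF w] by simp
  show "gev_u g z \<le> 1"
    using ln_gev_u_nonpos[OF w z] gev_u_pos[OF w] by simp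
qed (use dlogu_nonneg[OF w] w z in simp_all)

lemma abs_dgamma_ell_std_le_nonpos:
  assumes w: "1 + g * z > 0" and z: "z \<le> 0"
  shows "\<bar>dgamma_ell_std g z\<bar> \<le> max ((gev_u g z - 1) * dlogu g z) (- (z / (1 + g * z)))"
  unfolding dgamma_ell_std_def
proof (rule abs_stretch_minus_le_max)
  show "1 \<le> gev_u g z"
    using ln_gev_u_nonneg[OF w z] gev_u_pos[OF w] by simp
  show "z / (1 + g * z) \<le> 0"
    using w z by (simp add: divide_nonpos_pos)
qed (rule dlogu_nonneg[OF w])

lemma abs_dgamma_ell_std_le_max_half_sq:
  assumes g: "g \<ge> 0" and z: "z \<ge> 0"
  shows "\<bar>dgamma_ell_std g z\<bar> \<le> max (z\<^sup>2 / 2) z"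
proof -
  have w1: "1 + g * z \<ge> 1" using g z by simp
  have "z / (1 + g * z) \<le> z"
    using w1 z by (simp add: divide_le_eq mult_le_cancel_left1)
  then show ?thesis
    using abs_dgamma_ell_std_le_nonneg[of g z] dlogu_le_half_sq[OF g z] w1 z by linarith
qed

lemma abs_dgamma_ell_std_le_pos_nonneg:
  assumes g: "g > 0" and z: "z \<ge> 0"
  shows "\<bar>dgamma_ell_std g z\<bar> \<le>
    max (min (z\<^sup>2 / 2) (ln (1 + g * z) / g\<^sup>2)) (min z (1 / g))"
proof (rule max_le_max_min)
  have w1: "1 + g * z \<ge> 1" using g z by simp
  then show "\<bar>dgamma_ell_std g z\<bar> \<le> max (dlogu g z) (z / (1 + g * z))"
    using z by (intro abs_dgamma_ell_std_le_nonneg) auto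
  show "dlogu g z \<le> z\<^sup>2 / 2" using g z by (intro dlogu_le_half_sq) auto
  show "dlogu g z \<le> ln (1 + g * z) / g\<^sup>2" using g z by (rule dlogu_le_ln_div)
  show "z / (1 + g * z) \<le> z"
    using w1 z by (simp add: divide_le_eq mult_le_cancel_left1)
  have "z \<le> 1 / g * (1 + g * z)" using g by (simp add: field_simps)
  then show "z / (1 + g * z) \<le> 1 / g"
    using w1 by (simp add: divide_le_eq)
qed

lemma abs_dgamma_ell_std_le_nonpos_nonneg:
  assumes g: "g \<le> 0" and z: "z \<ge> 0" and w: "1 + g * z > 0"
  shows "\<bar>dgamma_ell_std g z\<bar> \<le> max (z\<^sup>2) z / (1 + g * z)"
proof -
  have "z\<^sup>2 / (1 + g * z) \<le> max (z\<^sup>2) z / (1 + g * z)"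
    using w by (simp add: divide_right_mono)
  then have "dlogu g z \<le> max (z\<^sup>2) z / (1 + g * z)"
    using dlogu_le_sq_div[OF w] by linarith
  moreover have "z / (1 + g * z) \<le> max (z\<^sup>2) z / (1 + g * z)"
    using w by (simp add: divide_right_mono)
  ultimately show ?thesis
    using abs_dgamma_ell_std_le_nonneg[OF w z] by simp
qed

lemma abs_dgamma_ell_std_le_nonneg_nonpos:
  assumes g: "g \<ge> 0" and z: "z \<le> 0" and w: "1 + g * z > 0"
  shows "\<bar>dgamma_ell_std g z\<bar> \<le>
    gev_u g z powr (1 + g) * max ((ln (gev_u g z))\<^sup>2) (ln (gev_u g z))"
proof -
  define u where "u = gev_u g z"
  define L where "L = ln u"
  define c where "c = u / (1 + g * z)"
  have u0: "u > 0" and u1: "u \<ge> 1" and c0: "c \<ge> 0" and zL: "- z \<le> L"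
    using gev_u_pos[OF w] ln_gev_u_nonneg[OF w z] ln_gev_u_bounds_nonneg[OF g w] w
    by (auto simp: u_def L_def c_def)
  then have L0: "L \<ge> 0" using z by linarith
  have "dlogu g z \<le> L\<^sup>2 / (1 + g * z)"
  proof -
    have "z\<^sup>2 \<le> L\<^sup>2" using zL z by (metis neg_0_le_iff_le power2_minus power_mono)
    then have "z\<^sup>2 / (1 + g * z) \<le> L\<^sup>2 / (1 + g * z)"
      using w by (simp add: divide_right_mono)
    then show ?thesis
      using dlogu_le_sq_div[OF w] by linarith
  qed
  then have "(u - 1) * dlogu g z \<le> u * (L\<^sup>2 / (1 + g * z))"
    using dlogu_nonneg[OF w] u1 by (intro mult_mono) auto
  then have "(u - 1) * dlogu g z \<le> c * L\<^sup>2"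
    by (simp add: c_def)
  moreover have "- (z / (1 + g * z)) \<le> c * L"
  proof -
    have "- (z / (1 + g * z)) \<le> L / (1 + g * z)"
      using divide_right_mono[OF zL, of "1 + g * z"] w by simp
    also have "\<dots> \<le> c * L"
      using u1 L0 w by (simp add: c_def divide_right_mono mult_le_cancel_right1)
    finally show ?thesis .
  qed
  ultimately have "\<bar>dgamma_ell_std g z\<bar> \<le> c * max (L\<^sup>2) L"
    using abs_dgamma_ell_std_le_nonpos[OF w z] c0 unfolding u_def[symmetric]
    by (intro le_max_imp_le_mult_max) auto
  then show ?thesis
    by (simp add: gev_u_powr_one_plus[OF w] c_def u_def L_def)
qed

lemma abs_dgamma_ell_std_le_nonpos_nonpos:
  assumes g: "g \<le> 0" and z: "z \<le> 0"
  shows "\<bar>dgamma_ell_std g z\<bar> \<le> gev_u g z * max ((ln (gev_u g z))\<^sup>2) (ln (gev_u g z))"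
proof -
  define u where "u = gev_u g z"
  define L where "L = ln u"
  have w: "1 + g * z > 0" using g z by (simp add: mult_nonpos_nonpos add_pos_nonneg)
  have u1: "u \<ge> 1" and L0: "L \<ge> 0" and zL: "- (z / (1 + g * z)) \<le> L"
    using gev_u_pos[OF w] ln_gev_u_nonneg[OF w z] ln_gev_u_bounds_nonpos[OF g w]
    by (auto simp: u_def L_def)
  have "(u - 1) * dlogu g z \<le> u * L\<^sup>2"
    using dlogu_le_ln_gev_u_sq[OF g z] dlogu_nonneg[OF w] u1
    by (simp add: u_def L_def mult_mono)
  moreover have "- (z / (1 + g * z)) \<le> u * L"
    using zL u1 L0 mult_le_cancel_right1[of L u] by linarith
  ultimately have "\<bar>dgamma_ell_std g z\<bar> \<le> u * max (L\<^sup>2) L"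
    using abs_dgamma_ell_std_le_nonpos[OF w z] u1 unfolding u_def[symmetric]
    by (intro le_max_imp_le_mult_max) auto
  then show ?thesis by (simp add: u_def L_def)
qed

theorem lemmaB4:
  fixes g mu sg x :: real
  defines "z \<equiv> gev_z mu sg x"
  defines "u \<equiv> gev_u g z"
  assumes sg_pos: "sg > 0"
    and supp: "1 + g * z > 0"
  shows "(g \<ge> 0 \<and> z \<ge> 0 \<longrightarrow>
            \<bar>dgamma_ell g mu sg x\<bar> \<le>
              (if g = 0 then max (z^2 / 2) z
               else max (min (z^2 / 2) (ln (1 + g * z) / g^2)) (min z (1 / g))))
       \<and> (g \<le> 0 \<and> z \<ge> 0 \<longrightarrow>
            \<bar>dgamma_ell g mu sg x\<bar> \<le> max (z^2) z / (1 + g * z))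
       \<and> (g \<ge> 0 \<and> z \<le> 0 \<longrightarrow>
            \<bar>dgamma_ell g mu sg x\<bar> \<le> u powr (1 + g) * max ((ln u)^2) (ln u))
       \<and> (g \<le> 0 \<and> z \<le> 0 \<longrightarrow>
            \<bar>dgamma_ell g mu sg x\<bar> \<le> u * max ((ln u)^2) (ln u))"
proof -
  have "dgamma_ell g mu sg x = dgamma_ell_std g z"
    by (simp add: dgamma_ell_eq_std z_def)
  then show ?thesis
    unfolding u_def
    using abs_dgamma_ell_std_le_max_half_sq[of g z] abs_dgamma_ell_std_le_pos_nonneg[of g z]
      abs_dgamma_ell_std_le_nonpos_nonneg[OF _ _ supp] abs_dgamma_ell_std_le_nonneg_nonpos[OF _ _ supp]
      abs_dgamma_ell_std_le_nonpos_nonpos[of g z]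
    by (auto simp: less_le)
qed

end
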